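(* Let $\kappa_1>0$, $\kappa_2<0$ and $\gamma=-\kappa_2/\kappa_1$. Let $M$ be the set of all minimum points of $H_2(\mathbf{x},\mathbf{y})=-2\kappa_1\kappa_2G(\mathbf{x},\mathbf{y})+\kappa_1^2h(\mathbf{x},\mathbf{x})+\kappa_2^2h(\mathbf{y},\mathbf{y})$, $\mathbf{x},\mathbf{y}\in D$, $\mathbf{x}\ne\mathbf{y}$. Then there exist $p\in(0,1)$ and $q\in(-1,0)$ depending only on $\gamma$ such that $M=\{(P,Q)\in D\times D: P=p(\cos\theta,\sin\theta),\ Q=q(\cos\theta,\sin\theta),\ \theta\in[0,2\pi)\}$. If $\gamma=1$, then $p=-q=\sqrt{\sqrt5-2}$.
   Context: $D=\{\mathbf{x}\in\mathbb{R}^2:|\mathbf{x}|<1\}$. $G(\mathbf{x},\mathbf{y})=\frac1{2\pi}\ln\frac1{|\mathbf{x}-\mathbf{y}|}-h(\mathbf{x},\mathbf{y})$ is the Dirichlet Green's function of $-\Delta$ in $D$, where $h(\mathbf{x},\mathbf{y})=-\frac1{2\pi}\ln|\mathbf{y}|-\frac1{2\pi}\ln\left|\mathbf{x}-\frac{\mathbf{y}}{|\mathbf{y}|^2}\right|$. *)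

theory Defs
  imports "HOL-Analysis.Analysis"
begin

definition diskD :: "(real^2) set" where
  "diskD = ball 0 1"

text \<open>Regular part of the Green's function. For y = 0 the paper's formula is
 singular; its continuous extension (value 0) is used there.\<close>
definition hreg :: "real^2 \<Rightarrow> real^2 \<Rightarrow> real" where
  "hreg x y = (if y = 0 then 0 else
      - (1 / (2 * pi)) * ln (norm y) - (1 / (2 * pi)) * ln (norm (x - (1 / (norm y)^2) *\<^sub>R y)))"

definition greenD :: "real^2 \<Rightarrow> real^2 \<Rightarrow> real" where
  "greenD x y = (1 / (2 * pi)) * ln (1 / norm (x - y)) - hreg x y"

definition H2 :: "real \<Rightarrow> real \<Rightarrow> real^2 \<Rightarrow> real^2 \<Rightarrow> real" where
  "H2 k1 k2 x y = - 2 * k1 * k2 * greenD x y + k1^2 * hreg x x + k2^2 * hreg y y"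

definition minset :: "real \<Rightarrow> real \<Rightarrow> ((real^2) \<times> (real^2)) set" where
  "minset k1 k2 = {(x, y). x \<in> diskD \<and> y \<in> diskD \<and> x \<noteq> y \<and>
      (\<forall>u v. u \<in> diskD \<longrightarrow> v \<in> diskD \<longrightarrow> u \<noteq> v \<longrightarrow> H2 k1 k2 x y \<le> H2 k1 k2 u v)}"

end

(* For x, y in the disk, H2 = k1^2 / (2 pi) * E(|x|, |y|, |x - y|) with
     E(r, s, d) = gamma ln (1 + (1 - r^2) (1 - s^2) / d^2) - ln (1 - r^2) - gamma^2 ln (1 - s^2).
   E decreases in d, so for given radii the best pairs are antipodal, d = r + s.
   In the coordinates r = tanh a, s = tanh b the antipodal energy E(r, s, r + s) becomes
   2 (- gamma ln tanh (a + b) + ln cosh a + gamma^2 ln cosh b), which is strictly convex;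
   its critical point, which exists by the intermediate value theorem, is the unique minimum.
   Hence the minimisers are the antipodal pairs with the critical radii, a full circle of them.
   For gamma = 1 the critical equation reads u^4 + 4 u^2 - 1 = 0. *)

theory Submission
  imports Defs
begin

lemma DERIV_strict_mono_imp_above_tangent:
  fixes f f' :: "real \<Rightarrow> real"
  assumes I: "is_interval I" and der: "\<And>x. x \<in> I \<Longrightarrow> DERIV f x :> f' x"
    and mono: "strict_mono_on I f'" and x: "x \<in> I" and c: "c \<in> I" and "x \<noteq> c"
  shows "f' c * (x - c) < f x - f c"
proof -
  have between: "z \<in> I" if "a \<in> I" "b \<in> I" "a \<le> z" "z \<le> b" for a b z
    using I that unfolding is_interval_1 by blast
  show ?thesis
  proof (cases "c < x")
    case True
    obtain z where z: "c < z" "z < x" "f x - f c = (x - c) * f' z"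
      using MVT2[OF True der[OF between[OF c x]]] by blast
    have "z \<in> I" using between[OF c x] z by simp
    then have "f' c < f' z" using strict_mono_onD[OF mono c _ \<open>c < z\<close>] by blast
    then show ?thesis using z True by (simp add: mult.commute)
  next
    case False
    then have lt: "x < c" using \<open>x \<noteq> c\<close> by simp
    obtain z where z: "x < z" "z < c" "f c - f x = (c - x) * f' z"
      using MVT2[OF lt der[OF between[OF x c]]] by blast
    have "z \<in> I" using between[OF x c] z by simp
    then have "f' z < f' c" using strict_mono_onD[OF mono _ c \<open>z < c\<close>] by blast
    then have "(c - x) * f' z < (c - x) * f' c" using lt by simp
    then show ?thesis using z by (simp add: algebra_simps)
  qed
qed

lemma tanh_artanh_real:
  fixes r :: real assumes "-1 < r" "r < 1" shows "tanh (artanh r) = r"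
proof -
  have e: "exp (- 2 * artanh r) = (1 - r) / (1 + r)"
    using assms by (simp add: artanh_def exp_minus)
  show ?thesis using assms unfolding tanh_real_altdef e by (simp add: field_simps)
qed

lemma tanh_artanh_add:
  fixes r s :: real
  assumes "-1 < r" "r < 1" "-1 < s" "s < 1"
  shows "tanh (artanh r + artanh s) = (r + s) / (1 + r * s)"
  using tanh_add[of "artanh r" "artanh s"] assms by (simp add: tanh_artanh_real)

lemma ln_one_minus_tanh_square: "ln (1 - (tanh a)\<^sup>2) = - 2 * ln (cosh (a::real))"
proof -
  have "1 - (tanh a)\<^sup>2 = ((cosh a)\<^sup>2 - (sinh a)\<^sup>2) / (cosh a)\<^sup>2"
    by (simp add: tanh_def power_divide field_simps)
  also have "\<dots> = inverse ((cosh a)\<^sup>2)" by (simp add: cosh_square_eq inverse_eq_divide)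
  finally have "1 - (tanh a)\<^sup>2 = inverse ((cosh a)\<^sup>2)" .
  then show ?thesis by (simp add: ln_inverse ln_realpow)
qed

lemma ln_cosh_above_tangent:
  fixes a c :: real assumes "a \<noteq> c"
  shows "tanh c * (a - c) < ln (cosh a) - ln (cosh c)"
proof (rule DERIV_strict_mono_imp_above_tangent[where I = UNIV])
  show "DERIV (\<lambda>a. ln (cosh a)) x :> tanh x" for x :: real
    by (auto intro!: derivative_eq_intros simp: tanh_def)
  show "strict_mono_on UNIV (tanh :: real \<Rightarrow> real)"
    using tanh_real_strict_mono by (simp add: strict_mono_on_def strict_mono_def)
qed (use assms in auto)

lemma neg_ln_tanh_above_tangent:
  fixes t c :: real assumes "0 < t" "0 < c"
  shows "(tanh c - 1 / tanh c) * (t - c) \<le> - ln (tanh t) + ln (tanh c)"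
proof (cases "t = c")
  case False
  have "(tanh c - 1 / tanh c) * (t - c) < - ln (tanh t) - - ln (tanh c)"
  proof (rule DERIV_strict_mono_imp_above_tangent[where I = "{0<..}"])
    show "DERIV (\<lambda>t. - ln (tanh t)) x :> tanh x - 1 / tanh x" if "x \<in> {0<..}" for x :: real
      using that by (auto intro!: derivative_eq_intros simp: field_simps power2_eq_square)
    show "strict_mono_on {0<..} (\<lambda>x::real. tanh x - 1 / tanh x)"
    proof (rule strict_mono_onI)
      fix x y :: real assume "x \<in> {0<..}" "x < y"
      then have "0 < tanh x" "tanh x < tanh y" by auto
      then have "1 / tanh y < 1 / tanh x" by (simp add: frac_less2)
      with \<open>tanh x < tanh y\<close> show "tanh x - 1 / tanh x < tanh y - 1 / tanh y" by linarith
    qed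
  qed (use assms False in auto)
  then show ?thesis by simp
qed simp

definition hyperbolic_energy :: "real \<Rightarrow> real \<Rightarrow> real \<Rightarrow> real" where
  "hyperbolic_energy g a b = - g * ln (tanh (a + b)) + ln (cosh a) + g\<^sup>2 * ln (cosh b)"

(* -w is the derivative of - ln tanh at a0 + b0, so crit_a and crit_b say that (a0, b0) is a
   critical point; the tangent-line bounds of the three convex terms then add up to the claim. *)
lemma hyperbolic_energy_strict_min:
  fixes g a b a0 b0 :: real
  defines "w \<equiv> 1 / tanh (a0 + b0) - tanh (a0 + b0)"
  assumes g: "0 < g" and ab: "0 < a + b" and ab0: "0 < a0 + b0" and ne: "(a, b) \<noteq> (a0, b0)"
    and crit_a: "tanh a0 = g * w" and crit_b: "g * tanh b0 = w"
  shows "hyperbolic_energy g a0 b0 < hyperbolic_energy g a b"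
proof -
  have sum: "- w * (a + b - (a0 + b0)) \<le> - ln (tanh (a + b)) + ln (tanh (a0 + b0))"
    using neg_ln_tanh_above_tangent[OF ab ab0] unfolding w_def by simp
  have A: "tanh a0 * (a - a0) \<le> ln (cosh a) - ln (cosh a0)"
    using ln_cosh_above_tangent[of a a0] by (cases "a = a0") auto
  have B: "tanh b0 * (b - b0) \<le> ln (cosh b) - ln (cosh b0)"
    using ln_cosh_above_tangent[of b b0] by (cases "b = b0") auto
  have "tanh a0 * (a - a0) + g\<^sup>2 * (tanh b0 * (b - b0))
      < (ln (cosh a) - ln (cosh a0)) + g\<^sup>2 * (ln (cosh b) - ln (cosh b0))"
  proof (cases "a = a0")
    case True
    then have "b \<noteq> b0" using ne by simp
    then have "g\<^sup>2 * (tanh b0 * (b - b0)) < g\<^sup>2 * (ln (cosh b) - ln (cosh b0))"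
      using ln_cosh_above_tangent g by simp
    then show ?thesis using A by linarith
  next
    case False
    then have "tanh a0 * (a - a0) < ln (cosh a) - ln (cosh a0)"
      using ln_cosh_above_tangent by simp
    moreover have "g\<^sup>2 * (tanh b0 * (b - b0)) \<le> g\<^sup>2 * (ln (cosh b) - ln (cosh b0))"
      using B by (simp add: mult_left_mono)
    ultimately show ?thesis by linarith
  qed
  moreover have "g * (- w * (a + b - (a0 + b0))) \<le> g * (- ln (tanh (a + b)) + ln (tanh (a0 + b0)))"
    using mult_left_mono[OF sum less_imp_le[OF g]] .
  moreover have "g * (- w * (a + b - (a0 + b0))) + tanh a0 * (a - a0) + g\<^sup>2 * (tanh b0 * (b - b0)) = 0"
  proof -
    have "g * (- w * (a + b - (a0 + b0))) + tanh a0 * (a - a0) + g\<^sup>2 * (tanh b0 * (b - b0))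
        = (tanh a0 - g * w) * (a - a0) + g * (g * tanh b0 - w) * (b - b0)"
      by (simp add: algebra_simps power2_eq_square)
    then show ?thesis using crit_a crit_b by simp
  qed
  ultimately show ?thesis unfolding hyperbolic_energy_def by (simp add: algebra_simps)
qed

definition reduced_energy :: "real \<Rightarrow> real \<Rightarrow> real \<Rightarrow> real \<Rightarrow> real" where
  "reduced_energy g r s d =
     g * ln (1 + (1 - r\<^sup>2) * (1 - s\<^sup>2) / d\<^sup>2) - ln (1 - r\<^sup>2) - g\<^sup>2 * ln (1 - s\<^sup>2)"

lemma reduced_energy_strict_antimono:
  assumes "0 < g" "\<bar>r\<bar> < 1" "\<bar>s\<bar> < 1" "0 < d" "d < d'"
  shows "reduced_energy g r s d' < reduced_energy g r s d"
proof -
  have P: "0 < (1 - r\<^sup>2) * (1 - s\<^sup>2)" using assms by (simp add: abs_square_less_1)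
  have "d\<^sup>2 < d'\<^sup>2" using assms by (simp add: power_strict_mono)
  then have "(1 - r\<^sup>2) * (1 - s\<^sup>2) / d'\<^sup>2 < (1 - r\<^sup>2) * (1 - s\<^sup>2) / d\<^sup>2"
    using P assms by (simp add: frac_less2)
  moreover have "0 < 1 + (1 - r\<^sup>2) * (1 - s\<^sup>2) / d'\<^sup>2" using P by (simp add: add_pos_nonneg)
  ultimately show ?thesis using assms unfolding reduced_energy_def by simp
qed

lemma reduced_energy_collinear:
  fixes a b :: real assumes "0 \<le> a" "0 \<le> b" "0 < a + b"
  shows "reduced_energy g (tanh a) (tanh b) (tanh a + tanh b) = 2 * hyperbolic_energy g a b"
proof -
  define r s where "r = tanh a" and "s = tanh b"
  have "0 < a \<or> 0 < b" using assms by linarith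
  then have rs: "0 \<le> r" "0 \<le> s" "0 < r + s"
    using assms unfolding r_def s_def by (auto intro: add_pos_nonneg add_nonneg_pos)
  have "tanh (a + b) = (r + s) / (1 + r * s)" using tanh_add[of a b] unfolding r_def s_def by simp
  moreover have "(1 + r * s)\<^sup>2 = (r + s)\<^sup>2 + (1 - r\<^sup>2) * (1 - s\<^sup>2)"
    by (simp add: power2_eq_square algebra_simps)
  ultimately have "1 + (1 - r\<^sup>2) * (1 - s\<^sup>2) / (r + s)\<^sup>2 = inverse ((tanh (a + b))\<^sup>2)"
    using rs by (simp add: field_simps power_divide)
  moreover have "0 < tanh (a + b)" using assms by simp
  ultimately show ?thesis
    unfolding reduced_energy_def hyperbolic_energy_def r_def s_def ln_one_minus_tanh_square
    by (simp add: ln_inverse ln_realpow algebra_simps)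
qed

(* The critical-point equations of (r, s) |-> reduced_energy g r s (r + s); the quotient of the
   two partial derivatives gives u = g^2 v. *)
definition critical_radii :: "real \<Rightarrow> real \<Rightarrow> real \<Rightarrow> bool" where
  "critical_radii g u v \<longleftrightarrow> 0 < u \<and> u < 1 \<and> 0 < v \<and> v < 1 \<and> u = g\<^sup>2 * v \<and>
     u * (u + v) * (1 + u * v) = g * (1 - u\<^sup>2) * (1 - v\<^sup>2)"

lemma critical_radii_exist:
  assumes g: "0 < g" shows "\<exists>u v. critical_radii g u v"
proof -
  define k where "k = (\<lambda>v::real. g\<^sup>2 * v * (g\<^sup>2 * v + v) * (1 + g\<^sup>2 * v * v)
      - g * (1 - (g\<^sup>2 * v)\<^sup>2) * (1 - v\<^sup>2))"
  define m where "m = min 1 (1 / g\<^sup>2)"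
  \<comment> \<open>k is the second equation with u = g^2 v; at v = m one of v, g^2 v equals 1, so k m > 0.\<close>
  have m: "0 < m" "m \<le> 1" "g\<^sup>2 * m \<le> 1" using g unfolding m_def by (auto simp: min_def field_simps)
  have "(1 - (g\<^sup>2 * m)\<^sup>2) * (1 - m\<^sup>2) = 0"
    using g unfolding m_def by (cases "g\<^sup>2 \<le> 1") (auto simp: min_def field_simps)
  moreover have "0 < g\<^sup>2 * m * (g\<^sup>2 * m + m) * (1 + g\<^sup>2 * m * m)"
    using m g by (intro mult_pos_pos add_pos_pos) auto
  moreover have "k m = g\<^sup>2 * m * (g\<^sup>2 * m + m) * (1 + g\<^sup>2 * m * m)
      - g * ((1 - (g\<^sup>2 * m)\<^sup>2) * (1 - m\<^sup>2))"
    unfolding k_def by (simp add: mult.assoc)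
  ultimately have km: "0 < k m" by (metis diff_zero mult_zero_right)
  have k0: "k 0 < 0" unfolding k_def using g by simp
  have "continuous_on {0..m} k" unfolding k_def by (intro continuous_intros)
  then obtain v where v: "0 \<le> v" "v \<le> m" "k v = 0" using IVT'[of k 0 0 m] k0 km m by auto
  then have "0 < v" "v < m" using k0 km by (auto simp: less_eq_real_def)
  moreover from this have "g\<^sup>2 * v < g\<^sup>2 * m" using g by simp
  then have "g\<^sup>2 * v < 1" using m by linarith
  ultimately have "critical_radii g (g\<^sup>2 * v) v"
    using v m g unfolding critical_radii_def k_def by (auto simp: mult.assoc)
  then show ?thesis by blast
qed

lemma critical_radii_one:
  assumes "critical_radii 1 u v" shows "u = sqrt (sqrt 5 - 2)" "v = sqrt (sqrt 5 - 2)"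
proof -
  from assms have u: "u = v" and v: "0 < v" and e: "v * (v + v) * (1 + v * v) = (1 - v\<^sup>2) * (1 - v\<^sup>2)"
    unfolding critical_radii_def by auto
  have "(v\<^sup>2 + 2)\<^sup>2 = 5" using e by (simp add: power2_eq_square algebra_simps)
  then have "v\<^sup>2 = sqrt 5 - 2" by (metis add_diff_cancel_right' add_nonneg_nonneg real_sqrt_unique zero_le_numeral zero_le_power2)
  then show "v = sqrt (sqrt 5 - 2)" using v by (metis abs_of_pos real_sqrt_abs)
  then show "u = sqrt (sqrt 5 - 2)" using u by simp
qed

lemma critical_radii_hyperbolic:
  assumes g: "0 < g" and c: "critical_radii g u v"
  defines "w \<equiv> 1 / tanh (artanh u + artanh v) - tanh (artanh u + artanh v)"
  shows "tanh (artanh u) = g * w" and "g * tanh (artanh v) = w"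
proof -
  from c have u: "0 < u" "u < 1" and v: "0 < v" "v < 1" and uv: "u = g\<^sup>2 * v"
    and eq: "u * (u + v) * (1 + u * v) = g * (1 - u\<^sup>2) * (1 - v\<^sup>2)"
    unfolding critical_radii_def by auto
  have T: "tanh (artanh u + artanh v) = (u + v) / (1 + u * v)"
    using u v by (intro tanh_artanh_add) auto
  have uv_pos: "0 < u + v" "0 < 1 + u * v" using u v by (simp_all add: add_pos_pos)
  have "w * ((u + v) * (1 + u * v)) = (1 + u * v)\<^sup>2 - (u + v)\<^sup>2"
    unfolding w_def T using uv_pos by (simp add: divide_simps power2_eq_square)
  also have "\<dots> = (1 - u\<^sup>2) * (1 - v\<^sup>2)" by (simp add: power2_eq_square algebra_simps)
  finally have W: "w * ((u + v) * (1 + u * v)) = (1 - u\<^sup>2) * (1 - v\<^sup>2)" .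
  have "u * ((u + v) * (1 + u * v)) = g * ((1 - u\<^sup>2) * (1 - v\<^sup>2))"
    using eq by (simp only: mult.assoc)
  also have "\<dots> = (g * w) * ((u + v) * (1 + u * v))"
    unfolding W[symmetric] by (simp only: mult.assoc)
  finally have "u = g * w" using uv_pos by simp
  then show "tanh (artanh u) = g * w" using u by (simp add: tanh_artanh_real)
  have "g * v = w" using uv \<open>u = g * w\<close> g by (auto simp: power2_eq_square)
  then show "g * tanh (artanh v) = w" using v by (simp add: tanh_artanh_real)
qed

lemma reduced_energy_strict_min:
  assumes g: "0 < g" and c: "critical_radii g u v"
    and r: "0 \<le> r" "r < 1" and s: "0 \<le> s" "s < 1" and rs: "0 < r + s" and ne: "(r, s) \<noteq> (u, v)"
  shows "reduced_energy g u v (u + v) < reduced_energy g r s (r + s)"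
proof -
  from c have u: "0 < u" "u < 1" and v: "0 < v" "v < 1" unfolding critical_radii_def by auto
  define a b a0 b0 where "a = artanh r" "b = artanh s" "a0 = artanh u" "b0 = artanh v"
  have tanh_ab: "tanh a = r" "tanh b = s" "tanh a0 = u" "tanh b0 = v"
    unfolding a_b_a0_b0_def using r s u v by (auto intro: tanh_artanh_real)
  have ab: "0 \<le> a" "0 \<le> b" "0 < a0" "0 < b0"
    using tanh_ab r s u v by (metis tanh_real_nonneg_iff tanh_real_pos_iff)+
  have "0 < a + b" using rs tanh_ab ab by (smt (verit) tanh_real_pos_iff)
  moreover have "0 < a0 + b0" "(a, b) \<noteq> (a0, b0)" using ab ne tanh_ab by auto
  moreover have "tanh a0 = g * (1 / tanh (a0 + b0) - tanh (a0 + b0))"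
    unfolding a_b_a0_b0_def by (rule critical_radii_hyperbolic(1)[OF g c])
  moreover have "g * tanh b0 = 1 / tanh (a0 + b0) - tanh (a0 + b0)"
    unfolding a_b_a0_b0_def by (rule critical_radii_hyperbolic(2)[OF g c])
  ultimately have "hyperbolic_energy g a0 b0 < hyperbolic_energy g a b"
    by (rule hyperbolic_energy_strict_min[OF g])
  then show ?thesis
    using reduced_energy_collinear[of a b g] reduced_energy_collinear[of a0 b0 g] tanh_ab ab
      \<open>0 < a + b\<close> by simp
qed

lemma one_minus_two_inner_eq:
  fixes x y :: "'a::real_inner"
  shows "1 - 2 * (x \<bullet> y) + (norm x)\<^sup>2 * (norm y)\<^sup>2
    = (norm (x - y))\<^sup>2 + (1 - (norm x)\<^sup>2) * (1 - (norm y)\<^sup>2)"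
  by (simp add: power2_norm_eq_inner inner_diff algebra_simps inner_commute)

lemma hreg_eq_ln:
  assumes x: "norm x < 1" and y: "norm y < 1"
  shows "hreg x y = - (1 / (4 * pi)) * ln (1 - 2 * (x \<bullet> y) + (norm x)\<^sup>2 * (norm y)\<^sup>2)"
proof (cases "y = 0")
  case False
  define y' where "y' = (1 / (norm y)\<^sup>2) *\<^sub>R y"
  have ny: "0 < norm y" using False by simp
  have "norm y' = 1 / norm y" unfolding y'_def using ny by (simp add: power2_eq_square)
  then have "1 < norm y'" using y ny by simp
  then have "x \<noteq> y'" using x by auto
  then have nz: "0 < norm (x - y')" by simp
  have sq: "(norm y * norm (x - y'))\<^sup>2 = 1 - 2 * (x \<bullet> y) + (norm x)\<^sup>2 * (norm y)\<^sup>2"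
    unfolding power_mult_distrib power2_norm_eq_inner inner_diff inner_scaleR_left inner_scaleR_right y'_def
    using ny by (simp add: field_simps power2_norm_eq_inner[symmetric] inner_commute power2_eq_square)
  have "ln (1 - 2 * (x \<bullet> y) + (norm x)\<^sup>2 * (norm y)\<^sup>2) = ln ((norm y * norm (x - y'))\<^sup>2)"
    unfolding sq ..
  also have "\<dots> = 2 * (ln (norm y) + ln (norm (x - y')))" using ny nz by (simp add: ln_realpow ln_mult)
  finally show ?thesis unfolding hreg_def y'_def[symmetric] using False by (simp add: field_simps)
qed (simp add: hreg_def)

lemma H2_eq_reduced_energy:
  assumes k1: "0 < k1" and x: "norm x < 1" and y: "norm y < 1" and "x \<noteq> y"
  shows "H2 k1 k2 x y = k1\<^sup>2 / (2 * pi) * reduced_energy (- k2 / k1) (norm x) (norm y) (norm (x - y))"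
proof -
  define P where "P = (1 - (norm x)\<^sup>2) * (1 - (norm y)\<^sup>2)"
  have d: "0 < norm (x - y)" using \<open>x \<noteq> y\<close> by simp
  have px: "0 < 1 - (norm x)\<^sup>2" "0 < 1 - (norm y)\<^sup>2" using x y by (simp_all add: abs_square_less_1)
  then have "0 < P" unfolding P_def by simp
  have diag: "hreg z z = - (1 / (2 * pi)) * ln (1 - (norm z)\<^sup>2)" if "norm z < 1" for z
  proof -
    have "1 - 2 * (z \<bullet> z) + (norm z)\<^sup>2 * (norm z)\<^sup>2 = (1 - (norm z)\<^sup>2)\<^sup>2"
      by (simp add: dot_square_norm power2_eq_square algebra_simps)
    moreover have "0 < 1 - (norm z)\<^sup>2" using that by (simp add: abs_square_less_1)
    ultimately show ?thesis using hreg_eq_ln[OF that that] by (simp add: ln_realpow)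
  qed
  have "ln (1 + P / (norm (x - y))\<^sup>2)
      = ln (1 - 2 * (x \<bullet> y) + (norm x)\<^sup>2 * (norm y)\<^sup>2) - 2 * ln (norm (x - y))"
  proof -
    have "1 + P / (norm (x - y))\<^sup>2 = (1 - 2 * (x \<bullet> y) + (norm x)\<^sup>2 * (norm y)\<^sup>2) / (norm (x - y))\<^sup>2"
      unfolding one_minus_two_inner_eq P_def using d by (simp add: field_simps)
    moreover have "0 < 1 - 2 * (x \<bullet> y) + (norm x)\<^sup>2 * (norm y)\<^sup>2"
      unfolding one_minus_two_inner_eq using \<open>0 < P\<close> P_def by (simp add: add_nonneg_pos)
    ultimately show ?thesis using d by (simp add: ln_div ln_realpow)
  qed
  then have "greenD x y = (1 / (4 * pi)) * ln (1 + P / (norm (x - y))\<^sup>2)"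
    unfolding greenD_def hreg_eq_ln[OF x y] using d by (simp add: ln_div field_simps)
  moreover have "k2 = - (- k2 / k1) * k1" using k1 by simp
  ultimately show ?thesis
    unfolding H2_def diag[OF x] diag[OF y] reduced_energy_def P_def[symmetric]
    using k1 by (simp add: field_simps power2_eq_square)
qed

lemma norm_cos_sin_vector: "norm (vector [cos t, sin t] :: real^2) = 1"
  unfolding norm_eq_sqrt_inner inner_vec_def sum_2 by simp

lemma unit_vector_eq_cos_sin:
  fixes e :: "real^2" assumes "norm e = 1"
  shows "\<exists>t\<in>{0..<2 * pi}. e = vector [cos t, sin t]"
proof -
  have "(e $ 1)\<^sup>2 + (e $ 2)\<^sup>2 = 1"
    using assms unfolding norm_eq_sqrt_inner inner_vec_def sum_2 by (simp add: power2_eq_square)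
  then obtain t where "0 \<le> t" "t < 2 * pi" "e $ 1 = cos t" "e $ 2 = sin t"
    by (rule sincos_total_2pi)
  then show ?thesis unfolding vec_eq_iff forall_2 by auto
qed

lemma norm_diff_eq_add_iff_antipodal:
  fixes x y :: "real^2"
  assumes x: "norm x = u" and y: "norm y = v" and u: "0 < u"
  shows "norm (x - y) = u + v \<longleftrightarrow>
    (\<exists>t\<in>{0..<2 * pi}. x = u *\<^sub>R vector [cos t, sin t] \<and> y = (- v) *\<^sub>R vector [cos t, sin t])"
proof
  assume "norm (x - y) = u + v"
  then have "norm (x + - y) = norm x + norm (- y)" using x y by simp
  then have yx: "u *\<^sub>R (- y) = v *\<^sub>R x" unfolding norm_triangle_eq using x y by simp
  define e where "e = (1 / u) *\<^sub>R x"
  have "x = u *\<^sub>R e" unfolding e_def using u by simp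
  moreover have "y = (- v) *\<^sub>R e"
    using arg_cong[OF yx, of "scaleR (- 1 / u)"] u unfolding e_def by (simp add: field_simps)
  moreover obtain t where "t \<in> {0..<2 * pi}" "e = vector [cos t, sin t]"
    using unit_vector_eq_cos_sin[of e] x u unfolding e_def by auto
  ultimately show "\<exists>t\<in>{0..<2 * pi}. x = u *\<^sub>R vector [cos t, sin t] \<and> y = (- v) *\<^sub>R vector [cos t, sin t]"
    by blast
next
  assume "\<exists>t\<in>{0..<2 * pi}. x = u *\<^sub>R vector [cos t, sin t] \<and> y = (- v) *\<^sub>R vector [cos t, sin t]"
  then obtain t where "x - y = (u + v) *\<^sub>R vector [cos t, sin t]"
    by (auto simp: algebra_simps)
  then show "norm (x - y) = u + v" using u y norm_ge_zero[of y] norm_cos_sin_vector[of t] by simp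
qed

lemma reduced_energy_ge_collinear:
  fixes x y :: "'a::real_normed_vector"
  assumes g: "0 < g" and x: "norm x < 1" and y: "norm y < 1" and "x \<noteq> y"
  shows "reduced_energy g (norm x) (norm y) (norm x + norm y)
      \<le> reduced_energy g (norm x) (norm y) (norm (x - y))"
    and "norm (x - y) < norm x + norm y \<Longrightarrow> reduced_energy g (norm x) (norm y) (norm x + norm y)
      < reduced_energy g (norm x) (norm y) (norm (x - y))"
proof -
  have "0 < norm (x - y)" using \<open>x \<noteq> y\<close> by simp
  then show "norm (x - y) < norm x + norm y \<Longrightarrow> reduced_energy g (norm x) (norm y) (norm x + norm y)
      < reduced_energy g (norm x) (norm y) (norm (x - y))"
    using g x y by (intro reduced_energy_strict_antimono) auto
  then show "reduced_energy g (norm x) (norm y) (norm x + norm y)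
      \<le> reduced_energy g (norm x) (norm y) (norm (x - y))"
    using norm_triangle_ineq4[of x y] by (cases "norm (x - y) < norm x + norm y") auto
qed

lemma reduced_energy_ge_critical:
  fixes x y :: "'a::real_normed_vector"
  assumes g: "0 < g" and c: "critical_radii g u v"
    and x: "norm x < 1" and y: "norm y < 1" and "x \<noteq> y"
  shows "reduced_energy g u v (u + v) \<le> reduced_energy g (norm x) (norm y) (norm (x - y))"
proof -
  have "0 < norm (x - y)" using \<open>x \<noteq> y\<close> by simp
  then have "0 < norm x + norm y" using norm_triangle_ineq4[of x y] by linarith
  then have "reduced_energy g u v (u + v) \<le> reduced_energy g (norm x) (norm y) (norm x + norm y)"
    using reduced_energy_strict_min[OF g c norm_ge_zero x norm_ge_zero y]
    by (cases "(norm x, norm y) = (u, v)") (auto intro: less_imp_le)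
  also have "\<dots> \<le> reduced_energy g (norm x) (norm y) (norm (x - y))"
    by (rule reduced_energy_ge_collinear(1)[OF g x y \<open>x \<noteq> y\<close>])
  finally show ?thesis .
qed

lemma reduced_energy_eq_critical_iff:
  fixes x y :: "real^2"
  assumes g: "0 < g" and c: "critical_radii g u v"
    and x: "norm x < 1" and y: "norm y < 1" and "x \<noteq> y"
  shows "reduced_energy g (norm x) (norm y) (norm (x - y)) = reduced_energy g u v (u + v) \<longleftrightarrow>
    (\<exists>t\<in>{0..<2 * pi}. x = u *\<^sub>R vector [cos t, sin t] \<and> y = (- v) *\<^sub>R vector [cos t, sin t])"
    (is "?E = ?m \<longleftrightarrow> ?circle")
proof
  have u: "0 < u" using c unfolding critical_radii_def by simp
  assume "?E = ?m"
  have "0 < norm (x - y)" using \<open>x \<noteq> y\<close> by simp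
  then have "0 < norm x + norm y" using norm_triangle_ineq4[of x y] by linarith
  then have radii: "norm x = u \<and> norm y = v"
    using reduced_energy_strict_min[OF g c, of "norm x" "norm y"] x y \<open>?E = ?m\<close>
      reduced_energy_ge_collinear(1)[OF g x y \<open>x \<noteq> y\<close>] by fastforce
  have "norm (x - y) = norm x + norm y"
    using reduced_energy_ge_collinear(2)[OF g x y \<open>x \<noteq> y\<close>] norm_triangle_ineq4[of x y]
      \<open>?E = ?m\<close> radii by fastforce
  then show ?circle using norm_diff_eq_add_iff_antipodal radii u by auto
next
  assume ?circle
  moreover have "norm (u *\<^sub>R vector [cos t, sin t] :: real^2) = u"
    and "norm ((- v) *\<^sub>R vector [cos t, sin t] :: real^2) = v" for t
    using c norm_cos_sin_vector[of t] unfolding critical_radii_def by auto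
  ultimately have "norm x = u" "norm y = v" "norm (x - y) = u + v"
    using norm_diff_eq_add_iff_antipodal[of x u y v] c unfolding critical_radii_def by auto
  then show "?E = ?m" by simp
qed

lemma critical_circle_in_disk:
  fixes e :: "real^2"
  assumes c: "critical_radii g u v" and e: "e = vector [cos t, sin t]"
  shows "norm (u *\<^sub>R e) < 1" "norm ((- v) *\<^sub>R e) < 1" "u *\<^sub>R e \<noteq> (- v) *\<^sub>R e"
proof -
  have uv: "0 < u" "u < 1" "0 < v" "v < 1" using c unfolding critical_radii_def by auto
  have "norm e = 1" using e by (simp add: norm_cos_sin_vector)
  moreover have "(u + v) *\<^sub>R e \<noteq> 0" using uv \<open>norm e = 1\<close> by auto
  ultimately show "norm (u *\<^sub>R e) < 1" "norm ((- v) *\<^sub>R e) < 1" "u *\<^sub>R e \<noteq> (- v) *\<^sub>R e"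
    using uv by (auto simp: scaleR_left_distrib eq_neg_iff_add_eq_0)
qed

lemma minset_iff_reduced_energy_min:
  assumes k1: "0 < k1"
  shows "(x, y) \<in> minset k1 k2 \<longleftrightarrow> norm x < 1 \<and> norm y < 1 \<and> x \<noteq> y \<and>
    (\<forall>x' y' :: real^2. norm x' < 1 \<longrightarrow> norm y' < 1 \<longrightarrow> x' \<noteq> y' \<longrightarrow>
      reduced_energy (- k2 / k1) (norm x) (norm y) (norm (x - y))
        \<le> reduced_energy (- k2 / k1) (norm x') (norm y') (norm (x' - y')))"
proof -
  have "0 < k1\<^sup>2 / (2 * pi)" using k1 by simp
  then have H_le: "H2 k1 k2 x y \<le> H2 k1 k2 x' y' \<longleftrightarrow>
      reduced_energy (- k2 / k1) (norm x) (norm y) (norm (x - y))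
        \<le> reduced_energy (- k2 / k1) (norm x') (norm y') (norm (x' - y'))"
    if "norm x < 1" "norm y < 1" "x \<noteq> y" "norm x' < 1" "norm y' < 1" "x' \<noteq> y'" for x y x' y'
    unfolding H2_eq_reduced_energy[OF k1 that(1-3)] H2_eq_reduced_energy[OF k1 that(4-6)]
    by (rule mult_le_cancel_left_pos)
  then show ?thesis unfolding minset_def diskD_def by (simp add: H_le cong: conj_cong)
qed

lemma minset_eq_critical_circle:
  assumes k1: "0 < k1" and k2: "k2 < 0" and c: "critical_radii (- k2 / k1) u v"
  shows "minset k1 k2 = {(P, Q). P \<in> diskD \<and> Q \<in> diskD \<and>
    (\<exists>\<theta>\<in>{0..<2 * pi}. P = u *\<^sub>R vector [cos \<theta>, sin \<theta>] \<and> Q = (- v) *\<^sub>R vector [cos \<theta>, sin \<theta>])}"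
proof -
  define g where "g = - k2 / k1"
  have g: "0 < g" unfolding g_def using k1 k2 by (simp add: divide_neg_pos)
  have c: "critical_radii g u v" using c unfolding g_def .
  define E where "E x y = reduced_energy g (norm x) (norm y) (norm (x - y))" for x y :: "real^2"
  define m where "m = reduced_energy g u v (u + v)"
  have E_ge: "m \<le> E x y" if "norm x < 1" "norm y < 1" "x \<noteq> y" for x y
    unfolding E_def m_def using reduced_energy_ge_critical[OF g c that] .
  have E_eq: "E x y = m \<longleftrightarrow>
      (\<exists>t\<in>{0..<2 * pi}. x = u *\<^sub>R vector [cos t, sin t] \<and> y = (- v) *\<^sub>R vector [cos t, sin t])"
    if "norm x < 1" "norm y < 1" "x \<noteq> y" for x y
    unfolding E_def m_def using reduced_energy_eq_critical_iff[OF g c that] .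
  define e :: "real^2" where "e = vector [cos 0, sin 0]"
  note e_in_disk = critical_circle_in_disk[OF c e_def]
  have "0 \<in> {0..<2 * pi}" by simp
  then have "E (u *\<^sub>R e) ((- v) *\<^sub>R e) = m" using E_eq[OF e_in_disk] unfolding e_def by blast
  have min_iff: "(x, y) \<in> minset k1 k2 \<longleftrightarrow> norm x < 1 \<and> norm y < 1 \<and> x \<noteq> y \<and>
      (\<forall>x' y'. norm x' < 1 \<longrightarrow> norm y' < 1 \<longrightarrow> x' \<noteq> y' \<longrightarrow> E x y \<le> E x' y')" for x y :: "real^2"
    unfolding E_def g_def by (rule minset_iff_reduced_energy_min[OF k1])
  have mem: "(x, y) \<in> minset k1 k2 \<longleftrightarrow> norm x < 1 \<and> norm y < 1 \<and> x \<noteq> y \<and> E x y = m" for x y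
  proof
    assume "(x, y) \<in> minset k1 k2"
    then have adm: "norm x < 1" "norm y < 1" "x \<noteq> y" and "E x y \<le> E (u *\<^sub>R e) ((- v) *\<^sub>R e)"
      using e_in_disk unfolding min_iff by auto
    then show "norm x < 1 \<and> norm y < 1 \<and> x \<noteq> y \<and> E x y = m"
      using E_ge[OF adm] \<open>E (u *\<^sub>R e) ((- v) *\<^sub>R e) = m\<close> by simp
  next
    assume xy: "norm x < 1 \<and> norm y < 1 \<and> x \<noteq> y \<and> E x y = m"
    have "E x y \<le> E x' y'" if "norm x' < 1" "norm y' < 1" "x' \<noteq> y'" for x' y'
      using E_ge[OF that] xy by simp
    then show "(x, y) \<in> minset k1 k2" unfolding min_iff using xy by blast
  qed
  have "(x, y) \<in> minset k1 k2 \<longleftrightarrow> norm x < 1 \<and> norm y < 1 \<and>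
      (\<exists>\<theta>\<in>{0..<2 * pi}. x = u *\<^sub>R vector [cos \<theta>, sin \<theta>] \<and> y = (- v) *\<^sub>R vector [cos \<theta>, sin \<theta>])"
    for x y unfolding mem using E_eq critical_circle_in_disk[OF c] by blast
  then show ?thesis unfolding diskD_def by auto
qed

theorem propositionA1:
  shows "\<exists>pf qf :: real \<Rightarrow> real. \<forall>k1 k2 :: real. k1 > 0 \<longrightarrow> k2 < 0 \<longrightarrow>
    (let \<gamma> = - k2 / k1 in
      pf \<gamma> \<in> {0<..<1} \<and> qf \<gamma> \<in> {-1<..<0} \<and>
      minset k1 k2 = {(P, Q). P \<in> diskD \<and> Q \<in> diskD \<and>
         (\<exists>\<theta>\<in>{0..<2*pi}. P = pf \<gamma> *\<^sub>R vector [cos \<theta>, sin \<theta>] \<and>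
                          Q = qf \<gamma> *\<^sub>R vector [cos \<theta>, sin \<theta>])} \<and>
      (\<gamma> = 1 \<longrightarrow> pf \<gamma> = sqrt (sqrt 5 - 2) \<and> qf \<gamma> = - sqrt (sqrt 5 - 2)))"
proof -
  obtain p q where pq: "\<And>g. 0 < g \<Longrightarrow> critical_radii g (p g) (q g)"
    using critical_radii_exist by metis
  show ?thesis
  proof (rule exI[of _ p], rule exI[of _ "\<lambda>g. - q g"], intro allI impI)
    fix k1 k2 :: real
    assume k1: "0 < k1" and k2: "k2 < 0"
    define \<gamma> where "\<gamma> = - k2 / k1"
    have c: "critical_radii \<gamma> (p \<gamma>) (q \<gamma>)"
      unfolding \<gamma>_def using k1 k2 by (intro pq) (simp add: divide_neg_pos)
    have "0 < p \<gamma>" "p \<gamma> < 1" "0 < q \<gamma>" "q \<gamma> < 1" using c unfolding critical_radii_def by auto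
    moreover have "\<gamma> = 1 \<Longrightarrow> p \<gamma> = sqrt (sqrt 5 - 2) \<and> q \<gamma> = sqrt (sqrt 5 - 2)"
      using c critical_radii_one by simp
    moreover note minset_eq_critical_circle[OF k1 k2 c[unfolded \<gamma>_def], folded \<gamma>_def]
    ultimately show "let \<gamma> = - k2 / k1 in
      p \<gamma> \<in> {0<..<1} \<and> - q \<gamma> \<in> {-1<..<0} \<and>
      minset k1 k2 = {(P, Q). P \<in> diskD \<and> Q \<in> diskD \<and>
         (\<exists>\<theta>\<in>{0..<2*pi}. P = p \<gamma> *\<^sub>R vector [cos \<theta>, sin \<theta>] \<and>
                          Q = - q \<gamma> *\<^sub>R vector [cos \<theta>, sin \<theta>])} \<and>
      (\<gamma> = 1 \<longrightarrow> p \<gamma> = sqrt (sqrt 5 - 2) \<and> - q \<gamma> = - sqrt (sqrt 5 - 2))"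
      unfolding Let_def \<gamma>_def[symmetric] by auto
  qed
qed

end
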